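(* For all integers $m\ge1$ and $v\ge1$, the untwisted Dowker sum satisfies $$S_{m,v,1}:=\sum_{k=1}^{m-1}\csc^{2v}\!\left(\frac{k\pi}{m}\right)=2^{2v+1}\sum_{n=0}^{v-1}\left(\frac{m}{2\pi}\right)^{2v-2n}\frac{\Gamma(2v-2n)}{\Gamma(2v)}\,s(v,n)\left(1-\frac{1}{m^{2v-2n}}\right)\zeta(2v-2n).$$ In particular $S_{m,v,1}$ is a polynomial in $m^2$ of degree $v$ divisible by $m^2-1$.
   Context: For integers $v\ge1$ and $0\le n\le v-1$, $s(v,n)$ denotes the $n$-th elementary symmetric polynomial evaluated at $1^2,2^2,\dots,(v-1)^2$, with $s(v,0)=1$. $\zeta$ is the Riemann zeta function. Empty sums equal $0$. *)

theory Defs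
  imports "HOL-Analysis.Analysis" "HOL-Computational_Algebra.Polynomial"
begin

definition esym_sq :: "nat \<Rightarrow> nat \<Rightarrow> real" where
  "esym_sq r n = (\<Sum>A\<in>{A. A \<subseteq> {1..<r} \<and> card A = n}. \<Prod>j\<in>A. (real j)^2)"

definition zeta_real :: "real \<Rightarrow> real" where
  "zeta_real s = (\<Sum>k. 1 / (real (Suc k)) powr s)"

definition dowker_sum :: "nat \<Rightarrow> nat \<Rightarrow> real" where
  "dowker_sum m r = (\<Sum>k\<in>{1..m-1}. inverse (sin (of_nat k * pi / of_nat m)) ^ (2*r))"

end

theory Submission
  imports Defs
begin

text \<open>
  For t not an integer let Q_k(t) = psi^(k)(t) + (-1)^(k+1) psi^(k)(1 - t), where psi^(k) is the
  k-th polygamma function (this is \<open>Polygamma_reflect k t\<close>). Differentiating the reflection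
  formula of Gamma gives Q_0(t) = -pi cot(pi t), hence Q_1(t) = pi^2 csc^2(pi t), and Q_k' = Q_(k+1).
  The second derivative of csc^(2v)(pi t) is a combination of csc^(2v+2)(pi t) and csc^(2v)(pi t);
  this matches the recurrence s(v+1,n+1) = s(v,n+1) + v^2 s(v,n), so by induction on v

    (2v-1)! pi^(2v) csc^(2v)(pi t) = sum_(n<v) (2 pi)^(2n) s(v,n) Q_(2v-2n-1)(t).

  At t = k/m the sum over k is evaluated with the multiplication formula
  sum_(k=1..m-1) psi^(2s-1)(k/m) = (2s-1)! (m^(2s) - 1) zeta(2s), which comes from splitting the
  series of zeta(2s) into residue classes modulo m. The result is a polynomial in m^2 vanishing at
  m^2 = 1, whose leading coefficient is a positive multiple of zeta(2v).
\<close>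

definition Polygamma_reflect :: "nat \<Rightarrow> real \<Rightarrow> real" where
  "Polygamma_reflect n t = Polygamma n t + (-1) ^ Suc n * Polygamma n (1 - t)"

lemma open_Compl_Ints: "open (- \<int> :: real set)"
  by (simp add: open_Compl)

lemma sin_pi_mult_nonzero: "(t :: real) \<notin> \<int> \<Longrightarrow> sin (pi * t) \<noteq> 0"
  by (metis mult.commute sin_times_pi_eq_0)

lemma not_Ints_imp_not_nonpos_Ints:
  fixes t :: real
  assumes "t \<notin> \<int>"
  shows "t \<notin> \<int>\<^sub>\<le>\<^sub>0" "1 - t \<notin> \<int>\<^sub>\<le>\<^sub>0"
proof -
  have "1 - t \<notin> \<int>"
    using assms Ints_diff[OF Ints_1, of "1 - t"] by auto
  then show "t \<notin> \<int>\<^sub>\<le>\<^sub>0" "1 - t \<notin> \<int>\<^sub>\<le>\<^sub>0"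
    using assms nonpos_Ints_subset_Ints by auto
qed

lemma DERIV_eq_if_eq_on_open:
  fixes f g :: "real \<Rightarrow> real"
  assumes "(f has_real_derivative a) (at x)" "(g has_real_derivative b) (at x)"
    and "open S" "x \<in> S" "\<And>y. y \<in> S \<Longrightarrow> f y = g y"
  shows "a = b"
proof -
  have "(g has_real_derivative a) (at x)"
    using has_field_derivative_transform_within_open[OF assms(1,3,4)] assms(5) by blast
  with assms(2) show ?thesis
    using DERIV_unique by blast
qed

lemma DERIV_DERIV_eq_if_eq_on_open:
  fixes f g :: "real \<Rightarrow> real"
  assumes "open S" "x \<in> S" "\<And>y. y \<in> S \<Longrightarrow> f y = g y"
    and "\<And>y. y \<in> S \<Longrightarrow> (f has_real_derivative f' y) (at y)"
    and "\<And>y. y \<in> S \<Longrightarrow> (f' has_real_derivative f'' y) (at y)"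
    and "\<And>y. y \<in> S \<Longrightarrow> (g has_real_derivative g' y) (at y)"
    and "\<And>y. y \<in> S \<Longrightarrow> (g' has_real_derivative g'' y) (at y)"
  shows "f'' x = g'' x"
proof -
  have "f' y = g' y" if "y \<in> S" for y
    using DERIV_eq_if_eq_on_open[OF assms(4,6)[OF that] assms(1) that assms(3)] .
  then show ?thesis
    using DERIV_eq_if_eq_on_open[OF assms(5,7)[OF assms(2)] assms(1,2)] by blast
qed

lemma has_real_derivative_Polygamma_reflect:
  assumes "t \<notin> \<int>"
  shows "(Polygamma_reflect n has_real_derivative Polygamma_reflect (Suc n) t) (at t)"
  using not_Ints_imp_not_nonpos_Ints[OF assms]
  unfolding Polygamma_reflect_def[abs_def]
  by (auto intro!: derivative_eq_intros)

lemma has_real_derivative_sum_Polygamma_reflect: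
  assumes "t \<notin> \<int>"
  shows "((\<lambda>y. \<Sum>n\<in>A. c n * Polygamma_reflect (k n) y) has_real_derivative
           (\<Sum>n\<in>A. c n * Polygamma_reflect (Suc (k n)) t)) (at t)"
  by (intro DERIV_sum DERIV_cmult has_real_derivative_Polygamma_reflect assms)

lemma Gamma_reflection_real:
  fixes t :: real
  assumes "t \<notin> \<int>"
  shows "Gamma t * Gamma (1 - t) = pi / sin (pi * t)"
proof -
  have "complex_of_real (Gamma t * Gamma (1 - t)) = of_real pi / sin (of_real pi * of_real t)"
    using Gamma_reflection_complex[of "complex_of_real t"]
    by (simp flip: Gamma_complex_of_real)
  also have "\<dots> = complex_of_real (pi / sin (pi * t))"
    by (simp flip: sin_of_real)
  finally show ?thesis
    by (simp only: of_real_eq_iff)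
qed

lemma Polygamma_reflect_0:
  assumes "t \<notin> \<int>"
  shows "Polygamma_reflect 0 t = - pi * cot (pi * t)"
proof -
  have sin: "sin (pi * t) \<noteq> 0"
    using sin_pi_mult_nonzero[OF assms] .
  have "((\<lambda>t. Gamma t * Gamma (1 - t)) has_real_derivative
          Gamma t * Digamma t * Gamma (1 - t) - Gamma t * (Gamma (1 - t) * Digamma (1 - t))) (at t)"
    using not_Ints_imp_not_nonpos_Ints[OF assms] by (auto intro!: derivative_eq_intros)
  moreover have "((\<lambda>t. pi / sin (pi * t)) has_real_derivative
                   - (pi * (cos (pi * t) * pi)) / sin (pi * t) ^ 2) (at t)"
    using sin by (auto intro!: derivative_eq_intros simp: power2_eq_square)
  ultimately have "Gamma t * Digamma t * Gamma (1 - t) - Gamma t * (Gamma (1 - t) * Digamma (1 - t))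
                     = - (pi * (cos (pi * t) * pi)) / sin (pi * t) ^ 2"
    by (rule DERIV_eq_if_eq_on_open[OF _ _ open_Compl_Ints])
       (use assms Gamma_reflection_real in auto)
  then have "Gamma t * Gamma (1 - t) * (Digamma t - Digamma (1 - t))
               = - (pi * (cos (pi * t) * pi)) / sin (pi * t) ^ 2"
    by (simp add: algebra_simps)
  also have "\<dots> = pi / sin (pi * t) * (- pi * cot (pi * t))"
    using sin by (simp add: cot_def power2_eq_square)
  finally have "pi / sin (pi * t) * (Digamma t - Digamma (1 - t))
                  = pi / sin (pi * t) * (- pi * cot (pi * t))"
    by (simp only: Gamma_reflection_real[OF assms])
  moreover have "pi / sin (pi * t) \<noteq> 0"
    using sin by simp
  ultimately have "Digamma t - Digamma (1 - t) = - pi * cot (pi * t)"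
    using mult_left_cancel by blast
  then show ?thesis
    by (simp add: Polygamma_reflect_def)
qed

lemma Polygamma_reflect_1:
  assumes "t \<notin> \<int>"
  shows "Polygamma_reflect 1 t = pi ^ 2 * inverse (sin (pi * t)) ^ 2"
proof -
  have "((\<lambda>t. - pi * cot (pi * t)) has_real_derivative
          - pi * (- inverse (sin (pi * t) ^ 2) * pi)) (at t)"
    by (intro DERIV_cmult DERIV_chain2[where f = cot and g = "\<lambda>t. pi * t"]
          DERIV_cot sin_pi_mult_nonzero assms)
       (auto intro!: derivative_eq_intros)
  then have "Polygamma_reflect (Suc 0) t = - pi * (- inverse (sin (pi * t) ^ 2) * pi)"
    by (rule DERIV_eq_if_eq_on_open[OF has_real_derivative_Polygamma_reflect[OF assms, of 0]
             _ open_Compl_Ints])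
       (use assms Polygamma_reflect_0 in auto)
  then show ?thesis
    by (simp add: power_inverse power2_eq_square)
qed

lemma has_real_derivative_inverse_sin_power:
  assumes "sin (pi * t) \<noteq> 0"
  shows "((\<lambda>t. inverse (sin (pi * t)) ^ k) has_real_derivative
           - real k * pi * cos (pi * t) * inverse (sin (pi * t)) ^ Suc k) (at t)"
proof -
  have "((\<lambda>t. inverse (sin (pi * t)) ^ k) has_real_derivative
          real k * inverse (sin (pi * t)) ^ (k - 1)
          * (- (inverse (sin (pi * t)) * (cos (pi * t) * pi) * inverse (sin (pi * t))))) (at t)"
    using assms by (auto intro!: derivative_eq_intros)
  moreover have "real k * inverse (sin (pi * t)) ^ (k - 1)
          * (- (inverse (sin (pi * t)) * (cos (pi * t) * pi) * inverse (sin (pi * t))))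
      = - real k * pi * cos (pi * t) * inverse (sin (pi * t)) ^ Suc k"
    by (cases k) (simp_all add: algebra_simps)
  ultimately show ?thesis
    by (rule DERIV_cong)
qed

lemma has_real_derivative_cos_inverse_sin_power:
  assumes "sin (pi * t) \<noteq> 0"
  shows "((\<lambda>t. - real k * pi * cos (pi * t) * inverse (sin (pi * t)) ^ Suc k) has_real_derivative
           real k * real (Suc k) * pi ^ 2 * inverse (sin (pi * t)) ^ (k + 2)
           - (real k * pi) ^ 2 * inverse (sin (pi * t)) ^ k) (at t)"
proof -
  define s c where "s = sin (pi * t)" and "c = cos (pi * t)"
  have "((\<lambda>t. - real k * pi * cos (pi * t)) has_real_derivative real k * pi ^ 2 * s) (at t)"
    unfolding s_def by (auto intro!: derivative_eq_intros simp: power2_eq_square)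
  from DERIV_mult[OF this has_real_derivative_inverse_sin_power[OF assms, of "Suc k"]]
  have "((\<lambda>t. - real k * pi * cos (pi * t) * inverse (sin (pi * t)) ^ Suc k) has_real_derivative
          real k * pi ^ 2 * s * inverse s ^ Suc k
          + real k * real (Suc k) * pi ^ 2 * c ^ 2 * inverse s ^ Suc (Suc k)) (at t)"
    unfolding s_def c_def by (simp add: algebra_simps power2_eq_square)
  moreover have "real k * pi ^ 2 * s * inverse s ^ Suc k
          + real k * real (Suc k) * pi ^ 2 * c ^ 2 * inverse s ^ Suc (Suc k)
      = real k * real (Suc k) * pi ^ 2 * inverse s ^ (k + 2) - (real k * pi) ^ 2 * inverse s ^ k"
  proof -
    have c2: "c ^ 2 = 1 - s ^ 2"
      by (simp add: s_def c_def cos_squared_eq)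
    have "real k * pi ^ 2 * s * inverse s ^ Suc k
          + real k * real (Suc k) * pi ^ 2 * c ^ 2 * inverse s ^ Suc (Suc k)
        = real k * pi ^ 2 * (s * inverse s) * inverse s ^ k
          + real k * real (Suc k) * pi ^ 2 * inverse s ^ (k + 2)
          - real k * real (Suc k) * pi ^ 2 * (s * inverse s) ^ 2 * inverse s ^ k"
      unfolding c2 by (simp add: algebra_simps power2_eq_square)
    also have "\<dots> = real k * real (Suc k) * pi ^ 2 * inverse s ^ (k + 2) - (real k * pi) ^ 2 * inverse s ^ k"
      using assms by (simp add: s_def algebra_simps power2_eq_square)
    finally show ?thesis .
  qed
  ultimately show ?thesis
    unfolding s_def by simp
qed

lemma subsets_card_Suc_insert:
  assumes "finite S" "a \<notin> S"
  shows "{A. A \<subseteq> insert a S \<and> card A = Suc n}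
           = {A. A \<subseteq> S \<and> card A = Suc n} \<union> insert a ` {A. A \<subseteq> S \<and> card A = n}"
proof (intro equalityI subsetI)
  fix A assume A: "A \<in> {A. A \<subseteq> insert a S \<and> card A = Suc n}"
  then have "finite A"
    using assms(1) finite_subset by auto
  show "A \<in> {A. A \<subseteq> S \<and> card A = Suc n} \<union> insert a ` {A. A \<subseteq> S \<and> card A = n}"
  proof (cases "a \<in> A")
    case True
    then have "A = insert a (A - {a})" "A - {a} \<in> {A. A \<subseteq> S \<and> card A = n}"
      using A \<open>finite A\<close> by auto
    then show ?thesis
      by blast
  qed (use A in auto)
next
  fix A assume "A \<in> {A. A \<subseteq> S \<and> card A = Suc n} \<union> insert a ` {A. A \<subseteq> S \<and> card A = n}"
  then show "A \<in> {A. A \<subseteq> insert a S \<and> card A = Suc n}"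
  proof
    assume "A \<in> insert a ` {A. A \<subseteq> S \<and> card A = n}"
    then obtain B where "B \<subseteq> S" "card B = n" "A = insert a B"
      by blast
    moreover have "finite B" "a \<notin> B"
      using \<open>B \<subseteq> S\<close> assms finite_subset by auto
    ultimately show ?thesis
      by auto
  qed auto
qed

lemma sum_prod_subsets_card_Suc_insert:
  fixes f :: "'a \<Rightarrow> 'b :: comm_semiring_1"
  assumes "finite S" "a \<notin> S"
  shows "(\<Sum>A | A \<subseteq> insert a S \<and> card A = Suc n. prod f A)
           = (\<Sum>A | A \<subseteq> S \<and> card A = Suc n. prod f A)
             + f a * (\<Sum>A | A \<subseteq> S \<and> card A = n. prod f A)"
proof -
  let ?X = "{A. A \<subseteq> S \<and> card A = Suc n}" and ?Y = "{A. A \<subseteq> S \<and> card A = n}"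
  have fin: "finite ?X" "finite ?Y"
    by (rule finite_subset[of _ "Pow S"]; use assms(1) in blast)+
  have "inj_on (insert a) ?Y"
  proof (rule inj_onI)
    fix A B assume "A \<in> ?Y" "B \<in> ?Y" "insert a A = insert a B"
    then show "A = B"
      using assms(2) by (metis Diff_insert_absorb subsetD mem_Collect_eq)
  qed
  then have "(\<Sum>A\<in>insert a ` ?Y. prod f A) = (\<Sum>A\<in>?Y. prod f (insert a A))"
    by (rule sum.reindex_cong) simp_all
  also have "\<dots> = (\<Sum>A\<in>?Y. f a * prod f A)"
  proof (rule sum.cong)
    fix A assume "A \<in> ?Y"
    then have "finite A" "a \<notin> A"
      using assms finite_subset by auto
    then show "prod f (insert a A) = f a * prod f A"
      by simp
  qed simp
  finally have image: "(\<Sum>A\<in>insert a ` ?Y. prod f A) = f a * (\<Sum>A\<in>?Y. prod f A)"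
    by (simp add: sum_distrib_left)
  have "?X \<inter> insert a ` ?Y = {}"
    using assms(2) by auto
  then have "(\<Sum>A\<in>?X \<union> insert a ` ?Y. prod f A)
               = (\<Sum>A\<in>?X. prod f A) + (\<Sum>A\<in>insert a ` ?Y. prod f A)"
    using fin by (intro sum.union_disjoint) auto
  then show ?thesis
    unfolding subsets_card_Suc_insert[OF assms] image .
qed

lemma esym_sq_0 [simp]: "esym_sq r 0 = 1"
proof -
  have "{A. A \<subseteq> {1..<r} \<and> card A = 0} = {{}}"
    by (auto dest: finite_subset[OF _ finite_atLeastLessThan])
  then show ?thesis
    by (simp add: esym_sq_def)
qed

lemma esym_sq_eq_0:
  assumes "0 < r" "r \<le> n"
  shows "esym_sq r n = 0"
proof -
  have "card A \<noteq> n" if "A \<subseteq> {1..<r}" for A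
    using card_mono[OF finite_atLeastLessThan that] assms by simp
  then show ?thesis
    by (auto simp: esym_sq_def intro: sum.neutral)
qed

lemma esym_sq_Suc_Suc:
  "0 < v \<Longrightarrow> esym_sq (Suc v) (Suc n) = esym_sq v (Suc n) + (real v) ^ 2 * esym_sq v n"
  using sum_prod_subsets_card_Suc_insert[of "{1..<v}" v "\<lambda>j. (real j) ^ 2" n]
  by (simp add: esym_sq_def atLeastLessThanSuc)

lemma esym_sq_weighted_sum_Suc:
  fixes a :: real and F :: "nat \<Rightarrow> real"
  assumes "0 < v"
  shows "(\<Sum>n<Suc v. a ^ n * esym_sq (Suc v) n * F (Suc v - n))
           = (\<Sum>n<v. a ^ n * esym_sq v n * F (Suc v - n))
             + a * (real v) ^ 2 * (\<Sum>n<v. a ^ n * esym_sq v n * F (v - n))"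
proof -
  have "(\<Sum>n<Suc v. a ^ n * esym_sq (Suc v) n * F (Suc v - n))
          = F (Suc v) + (\<Sum>n<v. a ^ Suc n * esym_sq v (Suc n) * F (v - n))
            + (\<Sum>n<v. a ^ Suc n * (real v) ^ 2 * esym_sq v n * F (v - n))"
    by (subst sum.lessThan_Suc_shift) (simp add: esym_sq_Suc_Suc[OF assms] algebra_simps sum.distrib)
  moreover have "(\<Sum>n<v. a ^ n * esym_sq v n * F (Suc v - n))
          = F (Suc v) + (\<Sum>n<v. a ^ Suc n * esym_sq v (Suc n) * F (v - n))"
  proof -
    have "(\<Sum>n<v. a ^ n * esym_sq v n * F (Suc v - n)) = (\<Sum>n<Suc v. a ^ n * esym_sq v n * F (Suc v - n))"
      using esym_sq_eq_0[OF assms order_refl] by simp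
    also have "\<dots> = F (Suc v) + (\<Sum>n<v. a ^ Suc n * esym_sq v (Suc n) * F (v - n))"
      by (subst sum.lessThan_Suc_shift) simp
    finally show ?thesis .
  qed
  ultimately show ?thesis
    by (simp add: sum_distrib_left algebra_simps)
qed

theorem inverse_sin_power_Polygamma_reflect_expansion:
  assumes "0 < v" "t \<notin> \<int>"
  shows "fact (2 * v - 1) * pi ^ (2 * v) * inverse (sin (pi * t)) ^ (2 * v)
           = (\<Sum>n<v. (4 * pi ^ 2) ^ n * esym_sq v n * Polygamma_reflect (2 * (v - n) - 1) t)"
  using assms
proof (induction v arbitrary: t rule: nat_induct_non_zero)
  case 1
  then show ?case
    using Polygamma_reflect_1[of t] by simp
next
  case (Suc v)
  define K :: real where "K = fact (2 * v - 1) * pi ^ (2 * v)"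
  define R where "R j y = (\<Sum>n<v. (4 * pi ^ 2) ^ n * esym_sq v n * Polygamma_reflect (2 * (v - n) + j - 1) y)"
    for j y
  define f0 where "f0 y = K * inverse (sin (pi * y)) ^ (2 * v)" for y
  define f2 where "f2 y = K * (real (2 * v) * real (Suc (2 * v)) * pi ^ 2 * inverse (sin (pi * y)) ^ (2 * v + 2)
                        - (real (2 * v) * pi) ^ 2 * inverse (sin (pi * y)) ^ (2 * v))" for y
  have R: "(R j has_real_derivative R (Suc j) y) (at y)" if "y \<notin> \<int>" for j y
  proof -
    have "(R j has_real_derivative (\<Sum>n<v. (4 * pi ^ 2) ^ n * esym_sq v n
            * Polygamma_reflect (Suc (2 * (v - n) + j - 1)) y)) (at y)"
      unfolding R_def[abs_def] by (rule has_real_derivative_sum_Polygamma_reflect[OF that])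
    moreover have "Suc (2 * (v - n) + j - 1) = 2 * (v - n) + Suc j - 1" if "n < v" for n
      using that by simp
    ultimately show ?thesis
      by (simp add: R_def)
  qed
  have f2R: "f2 t = R (Suc (Suc 0)) t"
  proof (rule DERIV_DERIV_eq_if_eq_on_open[OF open_Compl_Ints _ _ _ _ R R, of t f0])
    show "f0 y = R 0 y" if "y \<in> - \<int>" for y
      using Suc.IH[of y] that by (simp add: f0_def R_def K_def)
    show "(f0 has_real_derivative
             K * (- real (2 * v) * pi * cos (pi * y) * inverse (sin (pi * y)) ^ Suc (2 * v))) (at y)"
      and "((\<lambda>y. K * (- real (2 * v) * pi * cos (pi * y) * inverse (sin (pi * y)) ^ Suc (2 * v)))
             has_real_derivative f2 y) (at y)" if "y \<in> - \<int>" for y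
      unfolding f0_def[abs_def] f2_def
      by (intro DERIV_cmult has_real_derivative_inverse_sin_power
            has_real_derivative_cos_inverse_sin_power sin_pi_mult_nonzero that[unfolded Compl_iff])+
  qed (use Suc.prems in simp_all)
  have "fact (2 * Suc v - 1) = real (2 * v) * real (Suc (2 * v)) * fact (2 * v - 1)"
    using \<open>0 < v\<close> by (cases v) (simp_all add: algebra_simps)
  then have "fact (2 * Suc v - 1) * pi ^ (2 * Suc v) * inverse (sin (pi * t)) ^ (2 * Suc v)
               = K * (real (2 * v) * real (Suc (2 * v)) * pi ^ 2 * inverse (sin (pi * t)) ^ (2 * v + 2))"
    by (simp add: K_def power_add power2_eq_square mult_ac)
  also have "\<dots> = f2 t + 4 * pi ^ 2 * (real v) ^ 2 * f0 t"
    by (simp add: f0_def f2_def power_mult_distrib right_diff_distrib)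
  also have "\<dots> = R (Suc (Suc 0)) t + 4 * pi ^ 2 * (real v) ^ 2 * R 0 t"
    using f2R Suc.IH[OF Suc.prems] by (simp add: f0_def R_def K_def)
  also have "\<dots> = (\<Sum>n<Suc v. (4 * pi ^ 2) ^ n * esym_sq (Suc v) n * Polygamma_reflect (2 * (Suc v - n) - 1) t)"
  proof -
    have "2 * (v - n) + Suc (Suc 0) - 1 = 2 * (Suc v - n) - 1" "2 * (v - n) + 0 - 1 = 2 * (v - n) - 1"
      if "n < v" for n
      using that by simp_all
    then show ?thesis
      using esym_sq_weighted_sum_Suc[OF \<open>0 < v\<close>, of "4 * pi ^ 2" "\<lambda>j. Polygamma_reflect (2 * j - 1) t"]
      by (simp add: R_def)
  qed
  finally show ?case .
qed

lemma zeta_real_sums: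
  assumes "2 \<le> p"
  shows "(\<lambda>l. inverse (real l ^ p)) sums zeta_real (real p)"
proof -
  have summable: "summable (\<lambda>l. inverse (real l ^ p))"
    using inverse_power_summable[OF assms] by simp
  have "zeta_real (real p) = (\<Sum>l. inverse (real (Suc l) ^ p))"
    unfolding zeta_real_def
    by (intro suminf_cong) (simp add: powr_realpow inverse_eq_divide del: of_nat_Suc)
  also have "\<dots> = (\<Sum>l. inverse (real l ^ p))"
    using suminf_split_head[OF summable] assms by simp
  finally show ?thesis
    using summable by (simp add: summable_sums)
qed

lemma zeta_real_pos:
  assumes "2 \<le> p"
  shows "0 < zeta_real (real p)"
proof -
  have "(\<Sum>l<2. inverse (real l ^ p)) \<le> (\<Sum>l. inverse (real l ^ p))"
    by (rule sum_le_suminf) (use zeta_real_sums[OF assms] in \<open>auto simp: sums_iff\<close>)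
  also have "\<dots> = zeta_real (real p)"
    using zeta_real_sums[OF assms] by (simp add: sums_iff)
  finally have "(\<Sum>l<2. inverse (real l ^ p)) \<le> zeta_real (real p)" .
  moreover have "(\<Sum>l<2. inverse (real l ^ p)) = 1"
    using assms by (simp add: numeral_2_eq_2)
  ultimately show ?thesis
    by simp
qed

lemma sums_group_residues:
  fixes f :: "nat \<Rightarrow> 'a :: real_normed_vector"
  assumes "f sums s" "0 < m"
  shows "(\<lambda>j. \<Sum>k<m. f (j * m + k)) sums s"
proof -
  have "sum f {j * m..<j * m + m} = (\<Sum>k<m. f (j * m + k))" for j
  proof -
    have "{j * m..<j * m + m} = {0 + j * m..<m + j * m}"
      by (simp add: add.commute)
    then show ?thesis
      by (simp only: sum.atLeastLessThan_shift_bounds) (simp add: comp_def atLeast0LessThan)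
  qed
  then show ?thesis
    using sums_group[OF assms] by simp
qed

lemma inverse_power_residue_class_sums:
  assumes "0 < k" "0 < m" "0 < n"
  shows "(\<lambda>j. inverse (real (j * m + k) ^ Suc n))
           sums (inverse (real m ^ Suc n) * ((-1) ^ Suc n * Polygamma n (real k / real m) / fact n))"
proof -
  have "real (j * m + k) = real m * (real k / real m + of_nat j)" for j
    using assms(2) by (simp add: field_simps)
  then have "(\<lambda>j. inverse (real (j * m + k) ^ Suc n))
               = (\<lambda>j. inverse (real m ^ Suc n) * inverse ((real k / real m + of_nat j) ^ Suc n))"
    by (simp add: power_mult_distrib mult_ac)
  moreover have "(\<lambda>j. inverse ((real k / real m + of_nat j) ^ Suc n))
                   sums ((-1) ^ Suc n * Polygamma n (real k / real m) / fact n)"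
    using assms by (intro Polygamma_LIMSEQ) auto
  ultimately show ?thesis
    by (simp only:) (rule sums_mult)
qed

lemma sum_Polygamma_fractions:
  assumes "0 < m" "0 < n"
  shows "(\<Sum>k\<in>{1..<m}. Polygamma n (real k / real m))
           = (-1) ^ Suc n * fact n * (real m ^ Suc n - 1) * zeta_real (real (Suc n))"
proof -
  define z where "z = zeta_real (real (Suc n))"
  define S where "S = (\<Sum>k\<in>{1..<m}. Polygamma n (real k / real m))"
  define F where "F l = inverse (real l ^ Suc n)" for l
  define A where "A k = inverse (real m ^ Suc n)
                        * (if k = 0 then z else (-1) ^ Suc n * Polygamma n (real k / real m) / fact n)"
    for k
  have F: "F sums z"
    unfolding F_def z_def using zeta_real_sums[of "Suc n"] assms(2) by simp
  have "(\<lambda>j. F (j * m + k)) sums A k" for k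
  proof (cases "k = 0")
    case True
    then show ?thesis
      using sums_mult[OF F, of "inverse (real m ^ Suc n)"]
      by (simp add: A_def F_def power_mult_distrib mult_ac)
  next
    case False
    then show ?thesis
      using inverse_power_residue_class_sums[of k m n] assms by (simp add: A_def F_def)
  qed
  then have "(\<lambda>j. \<Sum>k<m. F (j * m + k)) sums (\<Sum>k<m. A k)"
    by (rule sums_sum)
  then have "z = (\<Sum>k<m. A k)"
    using sums_unique2[OF sums_group_residues[OF F assms(1)]] by blast
  also have "\<dots> = A 0 + (\<Sum>k\<in>{1..<m}. A k)"
    using assms(1) by (simp add: atLeast1_lessThan_eq_remove0 sum.remove)
  also have "(\<Sum>k\<in>{1..<m}. A k) = inverse (real m ^ Suc n) * (-1) ^ Suc n / fact n * S"
    unfolding S_def sum_distrib_left by (intro sum.cong) (auto simp: A_def)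
  finally have "(-1) ^ Suc n * S = fact n * (real m ^ Suc n - 1) * z"
    using assms(1) by (simp add: A_def field_simps)
  then have "(-1) ^ Suc n * ((-1) ^ Suc n * S) = (-1) ^ Suc n * fact n * (real m ^ Suc n - 1) * z"
    by simp
  moreover have "(-1 :: real) ^ Suc n * (-1) ^ Suc n = 1"
    by (simp flip: power_mult_distrib)
  ultimately show ?thesis
    by (simp add: S_def z_def flip: mult.assoc)
qed

lemma sum_Polygamma_reflect_fractions:
  assumes "0 < m" "0 < s"
  shows "(\<Sum>k\<in>{1..<m}. Polygamma_reflect (2 * s - 1) (real k / real m))
           = 2 * fact (2 * s - 1) * (real m ^ (2 * s) - 1) * zeta_real (real (2 * s))"
proof -
  have "(\<Sum>k\<in>{1..<m}. Polygamma (2 * s - 1) (1 - real k / real m))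
          = (\<Sum>k\<in>{1..<m}. Polygamma (2 * s - 1) (real k / real m))"
  proof (rule sum.reindex_bij_witness[where i = "\<lambda>k. m - k" and j = "\<lambda>k. m - k"])
    fix k assume "k \<in> {1..<m}"
    then have "real (m - k) / real m = 1 - real k / real m"
      by (simp add: of_nat_diff diff_divide_distrib)
    then show "Polygamma (2 * s - 1) (real (m - k) / real m) = Polygamma (2 * s - 1) (1 - real k / real m)"
      by simp
  qed auto
  moreover have "Suc (2 * s - 1) = 2 * s"
    using assms by simp
  ultimately show ?thesis
    using sum_Polygamma_fractions[OF assms(1), of "2 * s - 1"] assms
    by (simp add: Polygamma_reflect_def sum.distrib)
qed

definition dowker_coeff :: "nat \<Rightarrow> nat \<Rightarrow> real" where
  "dowker_coeff r n = 2 * (4 * pi ^ 2) ^ n * esym_sq r n * fact (2 * (r - n) - 1)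
                        * zeta_real (real (2 * (r - n))) / (fact (2 * r - 1) * pi ^ (2 * r))"

lemma dowker_coeff_0_pos: "0 < r \<Longrightarrow> 0 < dowker_coeff r 0"
  using zeta_real_pos[of "2 * r"] by (simp add: dowker_coeff_def)

lemma dowker_sum_eq_sum_dowker_coeff:
  assumes "0 < r" "0 < m"
  shows "dowker_sum m r = (\<Sum>n<r. dowker_coeff r n * ((real m ^ 2) ^ (r - n) - 1))"
proof -
  define K :: real where "K = fact (2 * r - 1) * pi ^ (2 * r)"
  have "K > 0"
    by (simp add: K_def)
  have "inverse (sin (real k * pi / real m)) ^ (2 * r)
          = (\<Sum>n<r. (4 * pi ^ 2) ^ n * esym_sq r n
                     * Polygamma_reflect (2 * (r - n) - 1) (real k / real m)) / K"
    if "k \<in> {1..<m}" for k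
  proof -
    have "\<not> m dvd k"
      using that by (auto dest: nat_dvd_not_less)
    then have "real k / real m \<notin> \<int>"
      using fraction_not_in_Ints[where 'a = real, of "int m" "int k"] that by simp
    then have "K * inverse (sin (pi * (real k / real m))) ^ (2 * r)
                 = (\<Sum>n<r. (4 * pi ^ 2) ^ n * esym_sq r n
                     * Polygamma_reflect (2 * (r - n) - 1) (real k / real m))"
      unfolding K_def by (rule inverse_sin_power_Polygamma_reflect_expansion[OF assms(1)])
    moreover have "real k * pi / real m = pi * (real k / real m)"
      by simp
    ultimately show ?thesis
      using \<open>K > 0\<close> by (simp add: eq_divide_eq mult.commute)
  qed
  then have "dowker_sum m r
      = (\<Sum>n<r. (4 * pi ^ 2) ^ n * esym_sq r n
           * (\<Sum>k\<in>{1..<m}. Polygamma_reflect (2 * (r - n) - 1) (real k / real m))) / K"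
    using assms(2)
    by (simp add: dowker_sum_def atLeastLessThanSuc_atLeastAtMost[symmetric] sum_divide_distrib
                  sum_distrib_left sum.swap[of _ "{..<r}"] mult_ac)
  also have "\<dots> = (\<Sum>n<r. dowker_coeff r n * ((real m ^ 2) ^ (r - n) - 1))"
    unfolding sum_divide_distrib
  proof (rule sum.cong)
    fix n assume "n \<in> {..<r}"
    then have "(\<Sum>k\<in>{1..<m}. Polygamma_reflect (2 * (r - n) - 1) (real k / real m))
                 = 2 * fact (2 * (r - n) - 1) * ((real m ^ 2) ^ (r - n) - 1) * zeta_real (real (2 * (r - n)))"
      using sum_Polygamma_reflect_fractions[OF assms(2), of "r - n"] by (simp add: power_mult)
    then show "(4 * pi ^ 2) ^ n * esym_sq r n
           * (\<Sum>k\<in>{1..<m}. Polygamma_reflect (2 * (r - n) - 1) (real k / real m)) / K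
        = dowker_coeff r n * ((real m ^ 2) ^ (r - n) - 1)"
      by (simp add: dowker_coeff_def K_def)
  qed simp
  finally show ?thesis .
qed

lemma ex_poly_sum_powers_minus_one:
  fixes c :: "nat \<Rightarrow> 'a :: idom"
  assumes "c 0 \<noteq> 0"
  shows "\<exists>p. degree p = r \<and> [:-1, 1:] dvd p \<and> (\<forall>x. poly p x = (\<Sum>n<r. c n * (x ^ (r - n) - 1)))"
proof (intro exI conjI allI)
  let ?p = "\<Sum>n<r. smult (c n) (monom 1 (r - n) - 1)"
  show "poly ?p x = (\<Sum>n<r. c n * (x ^ (r - n) - 1))" for x
    by (simp add: poly_sum poly_monom)
  then show "[:-1, 1:] dvd ?p"
    using poly_eq_0_iff_dvd[of ?p 1] by simp
  show "degree ?p = r"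
  proof (cases r)
    case (Suc r')
    have "coeff ?p r = (\<Sum>n<r. if n = 0 then c n else 0)"
      unfolding coeff_sum using Suc by (intro sum.cong) (auto simp: coeff_monom)
    then have "coeff ?p r = c 0"
      using Suc by simp
    moreover have "degree ?p \<le> r"
      by (intro degree_sum_le) (auto intro: order.trans[OF degree_diff_le] simp: degree_monom_eq)
    ultimately show ?thesis
      using assms le_degree[of ?p r] by simp
  qed simp
qed

lemma Gamma_of_nat_pos: "0 < k \<Longrightarrow> Gamma (real k) = fact (k - 1)"
  using Gamma_fact[of "k - 1"] by (simp add: of_nat_diff)

lemma dowker_coeff_term_Gamma_form:
  assumes "n < r" "0 < m"
  shows "dowker_coeff r n * ((real m ^ 2) ^ (r - n) - 1)
           = 2 ^ (2 * r + 1) * ((real m / (2 * pi)) ^ (2 * r - 2 * n)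
               * (Gamma (real (2 * r - 2 * n)) / Gamma (real (2 * r)))
               * esym_sq r n * (1 - 1 / real m ^ (2 * r - 2 * n)) * zeta_real (real (2 * r - 2 * n)))"
proof -
  define s where "s = r - n"
  have s: "r = n + s" "0 < s" "2 * r - 2 * n = 2 * s"
    using assms(1) by (simp_all add: s_def)
  have powers: "(4 * pi ^ 2) ^ n = 4 ^ n * pi ^ (2 * n)" "pi ^ (2 * r) = pi ^ (2 * n) * pi ^ (2 * s)"
    "(2 :: real) ^ (2 * r + 1) = 2 * 4 ^ n * 2 ^ (2 * s)" "(real m ^ 2) ^ s = real m ^ (2 * s)"
    "(real m / (2 * pi)) ^ (2 * s) = real m ^ (2 * s) / (2 ^ (2 * s) * pi ^ (2 * s))"
    by (simp_all add: s(1) power_add power_mult power_mult_distrib power_divide)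
  have Gamma: "Gamma (real (2 * s)) = fact (2 * s - 1)" "Gamma (real (2 * r)) = fact (2 * r - 1)"
    by (rule Gamma_of_nat_pos; use s in simp)+
  have field_identity: "2 * (A * P) * e * f2 * z / (f1 * (P * Q)) * (M - 1)
          = (2 * A * T) * ((M / (T * Q)) * (f2 / f1) * e * (1 - 1 / M) * z)"
    if "0 < P" "0 < Q" "0 < T" "0 < M" "0 < f1" for A P Q T M e f1 f2 z :: real
    using that by (simp add: field_simps)
  show ?thesis
    unfolding dowker_coeff_def s_def[symmetric] s(3) Gamma powers
    by (rule field_identity) (use assms(2) in simp_all)
qed

theorem mainTheorem9:
  fixes r :: nat
  assumes "r \<ge> 1"
  shows "(\<forall>m::nat. m \<ge> 1 \<longrightarrow>
           dowker_sum m r =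
             2 ^ (2*r+1) * (\<Sum>n\<in>{0..r-1}.
                (real m / (2*pi)) ^ (2*r-2*n) * (Gamma (real (2*r-2*n)) / Gamma (real (2*r)))
                * esym_sq r n * (1 - 1 / real m ^ (2*r-2*n)) * zeta_real (real (2*r-2*n))))
       \<and> (\<exists>p :: real poly. degree p = r \<and> [:-1, 1:] dvd p \<and>
            (\<forall>m::nat. m \<ge> 1 \<longrightarrow> dowker_sum m r = poly p ((real m)^2)))"
proof -
  have r: "0 < r" "{0..r-1} = {..<r}"
    using assms by auto
  have "dowker_sum m r =
          2 ^ (2*r+1) * (\<Sum>n\<in>{0..r-1}.
             (real m / (2*pi)) ^ (2*r-2*n) * (Gamma (real (2*r-2*n)) / Gamma (real (2*r)))
             * esym_sq r n * (1 - 1 / real m ^ (2*r-2*n)) * zeta_real (real (2*r-2*n)))"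
    if "0 < m" for m
    unfolding dowker_sum_eq_sum_dowker_coeff[OF r(1) that] r(2) sum_distrib_left
    by (intro sum.cong refl dowker_coeff_term_Gamma_form) (use that in auto)
  moreover have "dowker_coeff r 0 \<noteq> 0"
    using dowker_coeff_0_pos[OF r(1)] by simp
  then obtain p :: "real poly" where "degree p = r" "[:-1, 1:] dvd p"
    "\<forall>x. poly p x = (\<Sum>n<r. dowker_coeff r n * (x ^ (r - n) - 1))"
    using ex_poly_sum_powers_minus_one by blast
  ultimately show ?thesis
    using r(1) by (auto simp: dowker_sum_eq_sum_dowker_coeff)
qed

end
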